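(* If $\sum_{n=1}^N r_n \le C_{min}$, then every packet $p^{g,j}$ of the aggregate flow has delay $d^{g,j}-a^{g,j} \le \frac{\sum_{n}\sigma_n}{C_{min}}$.
   Context: A multiclass FIFO system serves packets from $N$ classes. Class $n$ has constant service rate $C_n>0$; $C_{min}=\min_n C_n$. The aggregate flow consists of all packets $p^{g,1},p^{g,2},\dots$ in order of arrival (ties broken arbitrarily), with arrival times $0\le a^{g,1}\le a^{g,2}\le\cdots$, lengths $l^{g,j}>0$, and departure times $d^{g,j}=\max\{a^{g,j},d^{g,j-1}\}+l^{g,j}/C_{c(j)}$, $d^{g,0}=0$, $c(j)$ the class of $p^{g,j}$. $A_n(s,t)$ denotes the total length of class-$n$ packets arriving in $[s,t]$. Each class $n$ is leaky-bucket constrained: $A_n(s,t)\le r_n(t-s)+\sigma_n$ for all $0\le s\le t$, with constants $r_n,\sigma_n\ge 0$. *)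

theory Defs
  imports "HOL-Analysis.Analysis"
begin

text \<open>Packets of the aggregate flow are indexed by positive naturals j (index 0 unused).
  a j: arrival time, l j: length, c j: class, C n: service rate of class n.\<close>

primrec departure :: "(nat \<Rightarrow> real) \<Rightarrow> (nat \<Rightarrow> real) \<Rightarrow> (nat \<Rightarrow> real) \<Rightarrow> (nat \<Rightarrow> nat) \<Rightarrow> nat \<Rightarrow> real" where
  "departure a l C c 0 = 0"
| "departure a l C c (Suc j) =
     max (a (Suc j)) (departure a l C c j) + l (Suc j) / C (c (Suc j))"

definition arrivals :: "nat set \<Rightarrow> (nat \<Rightarrow> real) \<Rightarrow> (nat \<Rightarrow> real) \<Rightarrow> (nat \<Rightarrow> nat) \<Rightarrow> nat \<Rightarrow> real \<Rightarrow> real \<Rightarrow> ennreal" where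
  "arrivals P a l c n s t = (\<Sum>\<^sub>\<infinity> j \<in> {j \<in> P. c j = n \<and> s \<le> a j \<and> a j \<le> t}. ennreal (l j))"

end

theory Submission
  imports Defs
begin

text \<open>Packet j leaves at the end of its busy period: if k is the first packet of that
  period, then d j = a k + \<Sum>i=k..j. l i / C (c i). The packets k..j all arrive in
  [a k, a j], so by the leaky-bucket constraints their total length is at most
  (\<Sum>n. r n)(a j - a k) + \<Sum>n. \<sigma> n \<le> C_min (a j - a k) + \<Sum>n. \<sigma> n; serving them at
  rate at least C_min therefore takes at most a j - a k + (\<Sum>n. \<sigma> n) / C_min.\<close>

lemma departure_eq_busy_period:
  assumes "0 \<le> a 1" and "1 \<le> j"
  shows "\<exists>k\<in>{1..j}. departure a l C c j = a k + (\<Sum>i=k..j. l i / C (c i))"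
  using assms(2)
proof (induction j rule: nat_induct_at_least)
  case base
  then show ?case using assms(1) by simp
next
  case (Suc m)
  show ?case
  proof (cases "departure a l C c m \<le> a (Suc m)")
    case True
    then show ?thesis by (intro bexI[of _ "Suc m"]) auto
  next
    case False
    from Suc.IH obtain k where k: "k \<in> {1..m}"
      and dm: "departure a l C c m = a k + (\<Sum>i=k..m. l i / C (c i))" by blast
    have "departure a l C c (Suc m) = departure a l C c m + l (Suc m) / C (c (Suc m))"
      using False by simp
    also have "\<dots> = a k + (\<Sum>i=k..Suc m. l i / C (c i))"
      using k dm by (simp add: sum.cl_ivl_Suc)
    finally show ?thesis using k by (intro bexI[of _ k]) auto
  qed
qed

lemma sum_le_arrivals:
  assumes "finite T" and "T \<subseteq> {j \<in> P. c j = n \<and> s \<le> a j \<and> a j \<le> t}"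
    and "\<forall>j\<in>T. 0 \<le> l j"
  shows "ennreal (\<Sum>j\<in>T. l j) \<le> arrivals P a l c n s t"
proof -
  have "ennreal (\<Sum>j\<in>T. l j) = (\<Sum>\<^sub>\<infinity>j\<in>T. ennreal (l j))"
    using assms(1,3) by (simp add: sum_ennreal)
  also have "\<dots> \<le> (\<Sum>\<^sub>\<infinity>j\<in>{j \<in> P. c j = n \<and> s \<le> a j \<and> a j \<le> t}. ennreal (l j))"
    using assms(2) by (intro infsum_mono_neutral) (auto intro: nonneg_summable_on_complete)
  finally show ?thesis unfolding arrivals_def .
qed

lemma busy_period_work_le:
  fixes K :: "nat set" and r \<sigma> :: "nat \<Rightarrow> real"
  assumes "finite K"
    and interval: "{k..j} \<subseteq> P"
    and cls: "\<forall>i\<in>{k..j}. c i \<in> K"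
    and len_nonneg: "\<forall>i\<in>{k..j}. 0 \<le> l i"
    and arr_between: "\<forall>i\<in>{k..j}. a k \<le> a i \<and> a i \<le> a j"
    and "0 \<le> a k" and "a k \<le> a j"
    and r_nonneg: "\<forall>n\<in>K. 0 \<le> r n" and \<sigma>_nonneg: "\<forall>n\<in>K. 0 \<le> \<sigma> n"
    and leaky: "\<forall>n\<in>K. \<forall>s t. 0 \<le> s \<and> s \<le> t \<longrightarrow>
                  arrivals P a l c n s t \<le> ennreal (r n * (t - s) + \<sigma> n)"
  shows "(\<Sum>i=k..j. l i) \<le> (\<Sum>n\<in>K. r n) * (a j - a k) + (\<Sum>n\<in>K. \<sigma> n)"
proof -
  have class_work: "(\<Sum>i\<in>{i \<in> {k..j}. c i = n}. l i) \<le> r n * (a j - a k) + \<sigma> n"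
    if n: "n \<in> K" for n
  proof -
    have "ennreal (\<Sum>i\<in>{i \<in> {k..j}. c i = n}. l i) \<le> arrivals P a l c n (a k) (a j)"
      using interval arr_between len_nonneg by (intro sum_le_arrivals) auto
    also have "\<dots> \<le> ennreal (r n * (a j - a k) + \<sigma> n)"
      using leaky n \<open>0 \<le> a k\<close> \<open>a k \<le> a j\<close> by blast
    finally have "ennreal (\<Sum>i\<in>{i \<in> {k..j}. c i = n}. l i) \<le> ennreal (r n * (a j - a k) + \<sigma> n)" .
    moreover have "0 \<le> r n * (a j - a k) + \<sigma> n"
      using r_nonneg \<sigma>_nonneg n \<open>a k \<le> a j\<close> by simp
    ultimately show ?thesis by (simp only: ennreal_le_iff)
  qed
  have "(\<Sum>i=k..j. l i) = (\<Sum>n\<in>K. \<Sum>i\<in>{i \<in> {k..j}. c i = n}. l i)"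
    using \<open>finite K\<close> cls by (intro sum.group[symmetric]) auto
  also have "\<dots> \<le> (\<Sum>n\<in>K. r n * (a j - a k) + \<sigma> n)"
    by (rule sum_mono) (rule class_work)
  also have "\<dots> = (\<Sum>n\<in>K. r n) * (a j - a k) + (\<Sum>n\<in>K. \<sigma> n)"
    by (simp add: sum.distrib sum_distrib_right)
  finally show ?thesis .
qed

lemma service_time_le_div_min_rate:
  fixes Cm :: real
  assumes "0 < Cm" and "\<forall>i\<in>I. 0 \<le> l i \<and> Cm \<le> C (c i)"
  shows "(\<Sum>i\<in>I. l i / C (c i)) \<le> (\<Sum>i\<in>I. l i) / Cm"
proof -
  have "(\<Sum>i\<in>I. l i / C (c i)) \<le> (\<Sum>i\<in>I. l i / Cm)"
    using assms by (intro sum_mono divide_left_mono) auto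
  then show ?thesis by (simp add: sum_divide_distrib)
qed

theorem corollary1:
  fixes N :: nat and C r \<sigma> :: "nat \<Rightarrow> real"
    and P :: "nat set" and a l :: "nat \<Rightarrow> real" and c :: "nat \<Rightarrow> nat"
  assumes N_pos: "N \<ge> 1"
    and C_pos: "\<forall>n\<in>{1..N}. C n > 0"
    and P_pos: "\<forall>j\<in>P. j \<ge> 1"
    and P_closed: "\<forall>j\<in>P. \<forall>i. 1 \<le> i \<and> i \<le> j \<longrightarrow> i \<in> P"
    and cls: "\<forall>j\<in>P. c j \<in> {1..N}"
    and arr_nonneg: "\<forall>j\<in>P. 0 \<le> a j"
    and arr_mono: "\<forall>i\<in>P. \<forall>j\<in>P. i \<le> j \<longrightarrow> a i \<le> a j"
    and len_pos: "\<forall>j\<in>P. l j > 0"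
    and r_nonneg: "\<forall>n\<in>{1..N}. r n \<ge> 0"
    and \<sigma>_nonneg: "\<forall>n\<in>{1..N}. \<sigma> n \<ge> 0"
    and leaky: "\<forall>n\<in>{1..N}. \<forall>s t. 0 \<le> s \<and> s \<le> t \<longrightarrow>
                  arrivals P a l c n s t \<le> ennreal (r n * (t - s) + \<sigma> n)"
    and stab: "(\<Sum>n=1..N. r n) \<le> Min (C ` {1..N})"
  shows "\<forall>j\<in>P. departure a l C c j - a j \<le> (\<Sum>n=1..N. \<sigma> n) / Min (C ` {1..N})"
proof
  fix j assume jP: "j \<in> P"
  define Cm where "Cm = Min (C ` {1..N})"
  have Cm_pos: "0 < Cm" unfolding Cm_def using C_pos N_pos by (subst Min_gr_iff) auto
  have "1 \<in> P" using P_closed P_pos jP by blast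
  then obtain k where k: "k \<in> {1..j}"
    and dep: "departure a l C c j = a k + (\<Sum>i=k..j. l i / C (c i))"
    using departure_eq_busy_period[of a j l C c] arr_nonneg P_pos jP by blast
  have interval: "{k..j} \<subseteq> P" using P_closed jP k by auto
  have "a k \<le> a j" using arr_mono interval jP k by (simp add: subset_iff)
  have "(\<Sum>i=k..j. l i) \<le> (\<Sum>n=1..N. r n) * (a j - a k) + (\<Sum>n=1..N. \<sigma> n)"
    using interval cls len_pos arr_mono arr_nonneg r_nonneg \<sigma>_nonneg leaky k \<open>a k \<le> a j\<close>
    by (intro busy_period_work_le) (auto simp: less_imp_le subset_iff)
  also have "\<dots> \<le> Cm * (a j - a k) + (\<Sum>n=1..N. \<sigma> n)"
    using stab \<open>a k \<le> a j\<close> unfolding Cm_def by (intro add_right_mono mult_right_mono) auto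
  finally have work: "(\<Sum>i=k..j. l i) / Cm \<le> (a j - a k) + (\<Sum>n=1..N. \<sigma> n) / Cm"
    using Cm_pos by (simp add: field_simps)
  have "(\<Sum>i=k..j. l i / C (c i)) \<le> (\<Sum>i=k..j. l i) / Cm"
    using Cm_pos interval len_pos cls
    by (intro service_time_le_div_min_rate) (auto simp: Cm_def less_imp_le subset_iff)
  with dep work show "departure a l C c j - a j \<le> (\<Sum>n=1..N. \<sigma> n) / Min (C ` {1..N})"
    unfolding Cm_def by linarith
qed

end
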